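(* Let $H_A,H_B$ be finite-dimensional Hilbert spaces and let $|\Psi\rangle\in H_A\otimes H_B$ be a unit vector with Schmidt decomposition $|\Psi\rangle=\sum_i a_i|e_i\rangle|f_i\rangle$, where $\{|e_i\rangle\}$, $\{|f_i\rangle\}$ are orthonormal, and the Schmidt coefficients are ordered decreasingly $a_1\ge a_2\ge\cdots\ge0$ (with $a_2=0$ if the Schmidt rank is $1$). Then $E_W(|\Psi\rangle\langle\Psi|)=a_1a_2$.
   Context: A density operator on $H_A\otimes H_B$ is separable if it is a convex combination of product states $\sigma_A\otimes\sigma_B$. An entanglement witness (EW) is a Hermitian operator $W$ on $H_A\otimes H_B$ with $\mathrm{Tr}(W\sigma)\ge0$ for every separable $\sigma$; only normalized witnesses, $\mathrm{Tr}(W)=1$, are considered. An optimal entanglement witness $W_\rho$ for $\rho$ minimizes $\mathrm{Tr}(W\rho)$ over all normalized EWs. The witnessed entanglement is $E_W(\rho)=\max\{0,-\mathrm{Tr}(W_\rho\rho)\}$. *)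

theory Defs
  imports "Jordan_Normal_Form.Matrix" "Jordan_Normal_Form.Schur_Decomposition"
begin

text \<open>Finite-dimensional Hilbert spaces H_A = C^m, H_B = C^n; H_A (x) H_B = C^(m*n),
  with the tensor product realised as the Kronecker product.\<close>

definition kron_vec :: "complex vec \<Rightarrow> complex vec \<Rightarrow> complex vec" where
  "kron_vec u v = vec (dim_vec u * dim_vec v)
     (\<lambda>t. u $ (t div dim_vec v) * v $ (t mod dim_vec v))"

definition kron_mat :: "complex mat \<Rightarrow> complex mat \<Rightarrow> complex mat" where
  "kron_mat A B = mat (dim_row A * dim_row B) (dim_col A * dim_col B)
     (\<lambda>(i, j). A $$ (i div dim_row B, j div dim_col B) * B $$ (i mod dim_row B, j mod dim_col B))"

definition mtrace :: "complex mat \<Rightarrow> complex" where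
  "mtrace A = (\<Sum>i<dim_row A. A $$ (i, i))"

definition hermitian :: "nat \<Rightarrow> complex mat \<Rightarrow> bool" where
  "hermitian d A \<longleftrightarrow> A \<in> carrier_mat d d \<and> mat_adjoint A = A"

definition psd :: "nat \<Rightarrow> complex mat \<Rightarrow> bool" where
  "psd d A \<longleftrightarrow> hermitian d A \<and> (\<forall>v \<in> carrier_vec d. 0 \<le> Re ((A *\<^sub>v v) \<bullet>c v))"

definition density_op :: "nat \<Rightarrow> complex mat \<Rightarrow> bool" where
  "density_op d \<rho> \<longleftrightarrow> psd d \<rho> \<and> mtrace \<rho> = 1"

definition separable :: "nat \<Rightarrow> nat \<Rightarrow> complex mat \<Rightarrow> bool" where
  "separable m n \<sigma> \<longleftrightarrow>
     (\<exists>K (p :: nat \<Rightarrow> real) \<sigma>A \<sigma>B.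
        (\<forall>l<K. 0 \<le> p l \<and> density_op m (\<sigma>A l) \<and> density_op n (\<sigma>B l)) \<and>
        (\<Sum>l<K. p l) = 1 \<and>
        \<sigma> = mat (m * n) (m * n)
              (\<lambda>(i, j). \<Sum>l<K. complex_of_real (p l) * kron_mat (\<sigma>A l) (\<sigma>B l) $$ (i, j)))"

definition ent_witness :: "nat \<Rightarrow> nat \<Rightarrow> complex mat \<Rightarrow> bool" where
  "ent_witness m n W \<longleftrightarrow> hermitian (m * n) W \<and>
     (\<forall>\<sigma>. separable m n \<sigma> \<longrightarrow> 0 \<le> Re (mtrace (W * \<sigma>)))"

definition normalized_EW :: "nat \<Rightarrow> nat \<Rightarrow> complex mat \<Rightarrow> bool" where
  "normalized_EW m n W \<longleftrightarrow> ent_witness m n W \<and> mtrace W = 1"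

text \<open>Witnessed entanglement: E_W(rho) = max 0 (- Tr(W_rho rho)), where W_rho minimises
  Tr(W rho) over normalised witnesses; the minimal value is written as an infimum.\<close>
definition witnessed_ent :: "nat \<Rightarrow> nat \<Rightarrow> complex mat \<Rightarrow> real" where
  "witnessed_ent m n \<rho> =
     max 0 (- (INF W \<in> {W. normalized_EW m n W}. Re (mtrace (W * \<rho>))))"

definition proj :: "complex vec \<Rightarrow> complex mat" where
  "proj \<psi> = mat (dim_vec \<psi>) (dim_vec \<psi>) (\<lambda>(i, j). \<psi> $ i * cnj (\<psi> $ j))"

end

theory Submission
  imports Defs
begin

text \<open>Let \<open>\<psi> = \<Sum>\<^sub>i a\<^sub>i e\<^sub>i \<otimes> f\<^sub>i\<close> (indices from 0). Averaging the projectors onto the product vectors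
  \<open>(\<Sum>\<^sub>i \<omega>\<^bsup>r 2^i\<^esup> \<surd>a\<^sub>i e\<^sub>i) \<otimes> (\<Sum>\<^sub>j \<omega>\<^bsup>-r 2^j\<^esup> \<surd>a\<^sub>j f\<^sub>j)\<close> over the powers \<open>\<omega>\<^sup>r\<close> of a primitive
  \<open>2^(k+2)\<close>-th root of unity yields the separable operator
  \<open>|\<psi>\<rangle>\<langle>\<psi>| + \<Sum>\<^sub>i\<^sub>\<noteq>\<^sub>j a\<^sub>i a\<^sub>j |e\<^sub>i f\<^sub>j\<rangle>\<langle>e\<^sub>i f\<^sub>j|\<close>, because the powers of two form a Sidon set.
  A witness \<open>W\<close> is nonnegative on product vectors and, with \<open>P\<^sub>E, P\<^sub>F\<close> the projections onto the spans
  of the \<open>e\<^sub>i\<close> and \<open>f\<^sub>j\<close>, on \<open>P\<^sub>E \<otimes> (1 - P\<^sub>F)\<close> and \<open>(1 - P\<^sub>E) \<otimes> 1\<close>; hence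
  \<open>\<langle>\<psi>|W|\<psi>\<rangle> \<ge> -\<Sum>\<^sub>i\<^sub>\<noteq>\<^sub>j a\<^sub>i a\<^sub>j \<langle>e\<^sub>i f\<^sub>j|W|e\<^sub>i f\<^sub>j\<rangle> \<ge> -a\<^sub>0 a\<^sub>1 tr W\<close>. The bound is attained by
  the partial transpose of the singlet projector on \<open>span {e\<^sub>0, e\<^sub>1} \<otimes> span {f\<^sub>0, f\<^sub>1}\<close>.\<close>

lemma sum_lessThan_mult:
  fixes g :: "nat \<Rightarrow> 'a::comm_monoid_add"
  shows "(\<Sum>p<m * n. g p) = (\<Sum>s<m. \<Sum>t<n. g (s * n + t))"
proof (induction m)
  case (Suc m)
  have "(\<Sum>p<n + m * n. g p) = (\<Sum>p<m * n. g p) + (\<Sum>p\<in>{m * n..<n + m * n}. g p)"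
    by (simp add: lessThan_atLeast0 sum.atLeastLessThan_concat)
  also have "(\<Sum>p\<in>{m * n..<n + m * n}. g p) = (\<Sum>t<n. g (m * n + t))"
    using sum.shift_bounds_nat_ivl[of g 0 "m * n" n] by (simp add: lessThan_atLeast0 add.commute)
  finally show ?case
    using Suc by simp
qed simp

lemma div_mod_less_mult:
  fixes p m n :: nat
  assumes "p < m * n"
  shows "p div n < m" "p mod n < n"
proof -
  have "0 < n" using assms by (cases n) auto
  then show "p div n < m" "p mod n < n" using assms by (simp_all add: div_less_iff_less_mult)
qed

lemma row_scalar_prod:
  "A \<in> carrier_mat d d' \<Longrightarrow> v \<in> carrier_vec d' \<Longrightarrow> i < d \<Longrightarrow> row A i \<bullet> v = (\<Sum>j<d'. A $$ (i, j) * v $ j)"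
  by (simp add: scalar_prod_def atLeast0LessThan)

lemma cscalar_prod_sum:
  "x \<in> carrier_vec d \<Longrightarrow> y \<in> carrier_vec d \<Longrightarrow> x \<bullet>c y = (\<Sum>i<d. x $ i * cnj (y $ i))"
  by (simp add: scalar_prod_def atLeast0LessThan)

lemma cscalar_prod_swap: "x \<in> carrier_vec d \<Longrightarrow> y \<in> carrier_vec d \<Longrightarrow> y \<bullet>c x = cnj (x \<bullet>c y)"
  by (simp add: cscalar_prod_sum mult.commute)

lemma cscalar_prod_mult_mat_vec:
  assumes "A \<in> carrier_mat d d" "x \<in> carrier_vec d" "y \<in> carrier_vec d"
  shows "(A *\<^sub>v x) \<bullet>c y = (\<Sum>i<d. \<Sum>j<d. cnj (y $ i) * A $$ (i, j) * x $ j)"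
  using assms by (simp add: cscalar_prod_sum[of _ d] row_scalar_prod sum_distrib_left mult_ac)

lemma cscalar_prod_lincomb:
  fixes c :: "nat \<Rightarrow> complex"
  assumes "\<And>l. l < k \<Longrightarrow> f l \<in> carrier_vec d" "w \<in> carrier_vec d"
  shows "vec d (\<lambda>i. \<Sum>l<k. c l * f l $ i) \<bullet>c w = (\<Sum>l<k. c l * (f l \<bullet>c w))"
proof -
  have "vec d (\<lambda>i. \<Sum>l<k. c l * f l $ i) \<bullet>c w = (\<Sum>i<d. \<Sum>l<k. c l * f l $ i * cnj (w $ i))"
    using assms by (simp add: cscalar_prod_sum[of _ d] sum_distrib_right)
  also have "\<dots> = (\<Sum>l<k. \<Sum>i<d. c l * f l $ i * cnj (w $ i))"
    by (rule sum.swap)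
  also have "\<dots> = (\<Sum>l<k. c l * (f l \<bullet>c w))"
    using assms by (simp add: cscalar_prod_sum[of _ d] sum_distrib_left mult.assoc)
  finally show ?thesis .
qed

lemma kron_vec_carrier [simp]:
  "x \<in> carrier_vec m \<Longrightarrow> y \<in> carrier_vec n \<Longrightarrow> kron_vec x y \<in> carrier_vec (m * n)"
  unfolding kron_vec_def by simp

lemma dim_kron_vec [simp]: "dim_vec (kron_vec x y) = dim_vec x * dim_vec y"
  by (simp add: kron_vec_def)

lemma kron_vec_index:
  assumes "x \<in> carrier_vec m" "y \<in> carrier_vec n" "p < m * n"
  shows "kron_vec x y $ p = x $ (p div n) * y $ (p mod n)"
  using assms unfolding kron_vec_def by simp

lemma cscalar_prod_kron_vec:
  assumes "x \<in> carrier_vec m" "x' \<in> carrier_vec m" "y \<in> carrier_vec n" "y' \<in> carrier_vec n"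
  shows "kron_vec x y \<bullet>c kron_vec x' y' = (x \<bullet>c x') * (y \<bullet>c y')"
proof -
  have "kron_vec x y \<bullet>c kron_vec x' y'
      = (\<Sum>s<m. \<Sum>t<n. x $ s * cnj (x' $ s) * (y $ t * cnj (y' $ t)))"
    using assms by (simp add: cscalar_prod_sum[of _ "m * n"] sum_lessThan_mult kron_vec_index mult_ac)
  then show ?thesis
    using assms by (simp add: cscalar_prod_sum sum_product)
qed

lemma kron_mat_carrier [simp]:
  "A \<in> carrier_mat m m' \<Longrightarrow> B \<in> carrier_mat n n' \<Longrightarrow> kron_mat A B \<in> carrier_mat (m * n) (m' * n')"
  unfolding kron_mat_def by simp

lemma dim_kron_mat [simp]:
  "dim_row (kron_mat A B) = dim_row A * dim_row B" "dim_col (kron_mat A B) = dim_col A * dim_col B"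
  by (simp_all add: kron_mat_def)

lemma kron_mat_index:
  assumes "A \<in> carrier_mat m m'" "B \<in> carrier_mat n n'" "p < m * n" "q < m' * n'"
  shows "kron_mat A B $$ (p, q) = A $$ (p div n, q div n') * B $$ (p mod n, q mod n')"
  using assms unfolding kron_mat_def by simp

lemma kron_mat_mult_kron_vec:
  assumes A: "A \<in> carrier_mat m m'" and B: "B \<in> carrier_mat n n'"
    and x: "x \<in> carrier_vec m'" and y: "y \<in> carrier_vec n'"
  shows "kron_mat A B *\<^sub>v kron_vec x y = kron_vec (A *\<^sub>v x) (B *\<^sub>v y)"
proof (rule eq_vecI)
  fix p assume "p < dim_vec (kron_vec (A *\<^sub>v x) (B *\<^sub>v y))"
  then have p: "p < m * n" using A B by (simp add: kron_vec_def)
  have [simp]: "dim_row (kron_mat A B) = m * n" using A B by (simp add: kron_mat_def)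
  have "(kron_mat A B *\<^sub>v kron_vec x y) $ p
      = (\<Sum>s<m'. \<Sum>t<n'. A $$ (p div n, s) * x $ s * (B $$ (p mod n, t) * y $ t))"
    using A B x y p
    by (simp add: row_scalar_prod[of _ "m * n" "m' * n'"] sum_lessThan_mult kron_mat_index
        kron_vec_index mult_ac)
  also have "\<dots> = kron_vec (A *\<^sub>v x) (B *\<^sub>v y) $ p"
    using A B x y p div_mod_less_mult[OF p]
    by (simp add: kron_vec_index[of _ m _ n] row_scalar_prod sum_product)
  finally show "(kron_mat A B *\<^sub>v kron_vec x y) $ p = kron_vec (A *\<^sub>v x) (B *\<^sub>v y) $ p" .
qed (use A B in \<open>simp add: kron_vec_def kron_mat_def\<close>)

lemma cscalar_prod_kron_mult:
  assumes "A \<in> carrier_mat m m" "B \<in> carrier_mat n n"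
    and "x \<in> carrier_vec m" "x' \<in> carrier_vec m" "y \<in> carrier_vec n" "y' \<in> carrier_vec n"
  shows "(kron_mat A B *\<^sub>v kron_vec x y) \<bullet>c kron_vec x' y' = ((A *\<^sub>v x) \<bullet>c x') * ((B *\<^sub>v y) \<bullet>c y')"
  using assms by (simp add: kron_mat_mult_kron_vec cscalar_prod_kron_vec[of _ m _ _ n])

lemma kron_mat_one: "kron_mat (1\<^sub>m m) (1\<^sub>m n) = 1\<^sub>m (m * n)"
proof (rule eq_matI)
  fix p q assume "p < dim_row (1\<^sub>m (m * n))" "q < dim_col (1\<^sub>m (m * n))"
  then have "p < m * n" "q < m * n" by simp_all
  moreover have "p div n = q div n \<and> p mod n = q mod n \<longleftrightarrow> p = q"
    by (metis div_mult_mod_eq)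
  ultimately show "kron_mat (1\<^sub>m m) (1\<^sub>m n) $$ (p, q) = 1\<^sub>m (m * n) $$ (p, q)"
    using div_mod_less_mult[of p m n] div_mod_less_mult[of q m n]
    by (auto simp: kron_mat_index[of _ m m _ n n])
qed (simp_all add: kron_mat_def)

lemma kron_mat_diff_left:
  assumes "A \<in> carrier_mat m m" "A' \<in> carrier_mat m m" "B \<in> carrier_mat n n"
  shows "kron_mat (A - A') B = kron_mat A B - kron_mat A' B"
  using assms div_mod_less_mult by (intro eq_matI) (auto simp: kron_mat_def algebra_simps)

lemma kron_mat_diff_right:
  assumes "A \<in> carrier_mat m m" "B \<in> carrier_mat n n" "B' \<in> carrier_mat n n"
  shows "kron_mat A (B - B') = kron_mat A B - kron_mat A B'"
  using assms div_mod_less_mult by (intro eq_matI) (auto simp: kron_mat_def algebra_simps)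

lemma kron_mat_smult:
  "kron_mat (a \<cdot>\<^sub>m A) (b \<cdot>\<^sub>m B) = (a * b) \<cdot>\<^sub>m kron_mat A B"
  by (auto simp: kron_mat_def div_mod_less_mult)

lemma proj_carrier [simp]: "x \<in> carrier_vec d \<Longrightarrow> proj x \<in> carrier_mat d d"
  by (simp add: proj_def)

lemma proj_index: "x \<in> carrier_vec d \<Longrightarrow> i < d \<Longrightarrow> j < d \<Longrightarrow> proj x $$ (i, j) = x $ i * cnj (x $ j)"
  by (simp add: proj_def)

lemma proj_mult_vec:
  assumes "x \<in> carrier_vec d" "v \<in> carrier_vec d"
  shows "proj x *\<^sub>v v = (v \<bullet>c x) \<cdot>\<^sub>v x"
  using assms by (intro eq_vecI) (auto simp: proj_def scalar_prod_def atLeast0LessThan sum_distrib_left mult_ac)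

lemma cscalar_prod_proj_mult:
  assumes "x \<in> carrier_vec d" "g \<in> carrier_vec d" "h \<in> carrier_vec d"
  shows "(proj x *\<^sub>v g) \<bullet>c h = (g \<bullet>c x) * cnj (h \<bullet>c x)"
  using assms by (simp add: proj_mult_vec cscalar_prod_swap[of h d x])

lemma kron_mat_proj:
  assumes "x \<in> carrier_vec m" "y \<in> carrier_vec n"
  shows "kron_mat (proj x) (proj y) = proj (kron_vec x y)"
  using assms div_mod_less_mult by (intro eq_matI) (auto simp: proj_def kron_mat_def kron_vec_def)

definition outer :: "complex vec \<Rightarrow> complex vec \<Rightarrow> complex mat" where
  "outer x y = mat (dim_vec x) (dim_vec y) (\<lambda>(i, j). x $ i * cnj (y $ j))"

lemma outer_self: "outer x x = proj x"
  by (simp add: outer_def proj_def)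

lemma outer_carrier [simp]: "x \<in> carrier_vec d \<Longrightarrow> y \<in> carrier_vec d \<Longrightarrow> outer x y \<in> carrier_mat d d"
  by (simp add: outer_def)

lemma dim_outer [simp]: "dim_row (outer x y) = dim_vec x" "dim_col (outer x y) = dim_vec y"
  by (simp_all add: outer_def)

lemma outer_index: "x \<in> carrier_vec d \<Longrightarrow> y \<in> carrier_vec d \<Longrightarrow> i < d \<Longrightarrow> j < d \<Longrightarrow> outer x y $$ (i, j) = x $ i * cnj (y $ j)"
  by (simp add: outer_def)

lemma mtrace_smult: "A \<in> carrier_mat d d \<Longrightarrow> mtrace (c \<cdot>\<^sub>m A) = c * mtrace A"
  by (simp add: mtrace_def sum_distrib_left)

lemma mtrace_proj: "x \<in> carrier_vec d \<Longrightarrow> mtrace (proj x) = x \<bullet>c x"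
  by (simp add: mtrace_def proj_def cscalar_prod_sum)

lemma mtrace_mult:
  assumes "W \<in> carrier_mat d d" "M \<in> carrier_mat d d"
  shows "mtrace (W * M) = (\<Sum>p<d. \<Sum>q<d. W $$ (p, q) * M $$ (q, p))"
  using assms by (simp add: mtrace_def scalar_prod_def atLeast0LessThan)

lemma mtrace_mult_lincomb:
  assumes W: "W \<in> carrier_mat d d" and M: "\<And>l. l \<in> L \<Longrightarrow> M l \<in> carrier_mat d d"
  shows "mtrace (W * mat d d (\<lambda>(p, q). \<Sum>l\<in>L. c l * M l $$ (p, q)))
    = (\<Sum>l\<in>L. c l * mtrace (W * M l))"
  using W M by (simp add: mtrace_mult sum_distrib_left sum.swap[of _ L] mult_ac)

lemma mtrace_mult_add:
  assumes "W \<in> carrier_mat d d" "M \<in> carrier_mat d d" "M' \<in> carrier_mat d d"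
  shows "mtrace (W * (M + M')) = mtrace (W * M) + mtrace (W * M')"
  using assms by (simp add: mtrace_mult[of W d] distrib_left sum.distrib)

lemma mtrace_mult_diff:
  assumes "W \<in> carrier_mat d d" "M \<in> carrier_mat d d" "M' \<in> carrier_mat d d"
  shows "mtrace (W * (M - M')) = mtrace (W * M) - mtrace (W * M')"
proof -
  have "M - M' \<in> carrier_mat d d" using assms by (simp add: minus_carrier_mat)
  then show ?thesis
    using assms by (simp add: mtrace_mult[of W d] right_diff_distrib sum_subtractf)
qed

lemma mtrace_mult_smult:
  assumes "W \<in> carrier_mat d d" "M \<in> carrier_mat d d"
  shows "mtrace (W * (a \<cdot>\<^sub>m M)) = a * mtrace (W * M)"
  using assms by (simp add: mult_smult_distrib[of W d d M d] mtrace_smult[of _ d])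

lemma mtrace_mult_proj:
  assumes "W \<in> carrier_mat d d" "x \<in> carrier_vec d"
  shows "mtrace (W * proj x) = (W *\<^sub>v x) \<bullet>c x"
  using assms by (simp add: mtrace_mult proj_def cscalar_prod_sum[of _ d] row_scalar_prod
      sum_distrib_left mult_ac)

lemma mtrace_outer_mult:
  assumes "S \<in> carrier_mat d d" "x \<in> carrier_vec d" "y \<in> carrier_vec d"
  shows "mtrace (outer x y * S) = (S *\<^sub>v x) \<bullet>c y"
proof -
  have "mtrace (outer x y * S) = (\<Sum>j<d. \<Sum>i<d. x $ j * cnj (y $ i) * S $$ (i, j))"
    using assms by (simp add: mtrace_mult[of _ d] outer_def)
  also have "\<dots> = (\<Sum>i<d. \<Sum>j<d. x $ j * cnj (y $ i) * S $$ (i, j))"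
    by (rule sum.swap)
  also have "\<dots> = (S *\<^sub>v x) \<bullet>c y"
    using assms by (simp add: cscalar_prod_mult_mat_vec mult_ac)
  finally show ?thesis .
qed

lemma hermitian_iff:
  "hermitian d A \<longleftrightarrow> A \<in> carrier_mat d d \<and> (\<forall>i<d. \<forall>j<d. A $$ (j, i) = cnj (A $$ (i, j)))"
proof (cases "A \<in> carrier_mat d d")
  case True
  then have "mat_adjoint A = A \<longleftrightarrow> (\<forall>i<d. \<forall>j<d. cnj (A $$ (j, i)) = A $$ (i, j))"
    by (auto simp: mat_eq_iff mat_adjoint_def mat_of_rows_index)
  also have "\<dots> \<longleftrightarrow> (\<forall>i<d. \<forall>j<d. A $$ (j, i) = cnj (A $$ (i, j)))"
    by metis
  finally show ?thesis using True by (simp add: hermitian_def)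
qed (simp add: hermitian_def)

lemma hermitian_carrier: "hermitian d A \<Longrightarrow> A \<in> carrier_mat d d"
  by (simp add: hermitian_def)

lemma hermitian_cnj_index:
  assumes "hermitian d A" "i < d" "j < d"
  shows "cnj (A $$ (i, j)) = A $$ (j, i)"
proof -
  have "A $$ (j, i) = cnj (A $$ (i, j))"
    using assms unfolding hermitian_iff by blast
  then show ?thesis by simp
qed

lemma hermitian_cscalar_prod_swap:
  assumes A: "hermitian d A" and x: "x \<in> carrier_vec d" and y: "y \<in> carrier_vec d"
  shows "(A *\<^sub>v x) \<bullet>c y = cnj ((A *\<^sub>v y) \<bullet>c x)"
proof -
  have Ad: "A \<in> carrier_mat d d" using A by (rule hermitian_carrier)
  have "cnj ((A *\<^sub>v y) \<bullet>c x) = (\<Sum>i<d. \<Sum>j<d. cnj (y $ j) * A $$ (j, i) * x $ i)"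
    using Ad x y by (simp add: cscalar_prod_mult_mat_vec hermitian_cnj_index[OF A] mult_ac)
  also have "\<dots> = (\<Sum>j<d. \<Sum>i<d. cnj (y $ j) * A $$ (j, i) * x $ i)"
    by (rule sum.swap)
  also have "\<dots> = (A *\<^sub>v x) \<bullet>c y"
    using Ad x y by (simp add: cscalar_prod_mult_mat_vec)
  finally show ?thesis by simp
qed

lemma hermitian_form_real:
  "hermitian d A \<Longrightarrow> x \<in> carrier_vec d \<Longrightarrow> Im ((A *\<^sub>v x) \<bullet>c x) = 0"
  using arg_cong[OF hermitian_cscalar_prod_swap[of d A x x], of Im] by simp

lemma hermitian_mtrace_real:
  assumes A: "hermitian d A"
  shows "Im (mtrace A) = 0"
proof -
  have "Im (A $$ (i, i)) = 0" if "i < d" for i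
    using hermitian_cnj_index[OF A that that] by (simp add: complex_is_Real_iff[symmetric] Reals_cnj_iff)
  then show ?thesis using hermitian_carrier[OF A] by (simp add: mtrace_def)
qed

lemma psdI:
  "hermitian d A \<Longrightarrow> (\<And>v. v \<in> carrier_vec d \<Longrightarrow> 0 \<le> Re ((A *\<^sub>v v) \<bullet>c v)) \<Longrightarrow> psd d A"
  by (simp add: psd_def)

lemma psd_hermitian: "psd d A \<Longrightarrow> hermitian d A"
  by (simp add: psd_def)

lemma psd_carrier: "psd d A \<Longrightarrow> A \<in> carrier_mat d d"
  by (simp add: psd_def hermitian_def)

lemma psd_form_nonneg: "psd d A \<Longrightarrow> x \<in> carrier_vec d \<Longrightarrow> 0 \<le> Re ((A *\<^sub>v x) \<bullet>c x)"
  by (simp add: psd_def)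

lemma cscalar_prod_mult_mat_vec_add_smult:
  assumes "A \<in> carrier_mat d d" "x \<in> carrier_vec d" "y \<in> carrier_vec d"
  shows "(A *\<^sub>v (x + c \<cdot>\<^sub>v y)) \<bullet>c (x + c \<cdot>\<^sub>v y)
    = (A *\<^sub>v x) \<bullet>c x + c * ((A *\<^sub>v y) \<bullet>c x) + cnj c * ((A *\<^sub>v x) \<bullet>c y)
      + c * cnj c * ((A *\<^sub>v y) \<bullet>c y)"
  using assms by (simp add: cscalar_prod_mult_mat_vec[of _ d] ring_distribs sum.distrib sum_distrib_left mult_ac)

lemma le_mult_of_quadratic_nonneg:
  fixes a b q :: real
  assumes nonneg: "\<And>t. 0 \<le> a - 2 * t * q + t\<^sup>2 * q * b" and "0 \<le> q" "0 \<le> b"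
  shows "q \<le> a * b"
proof (cases "b = 0")
  case True
  show ?thesis
  proof (rule ccontr)
    assume "\<not> q \<le> a * b"
    with True have "0 < q" by simp
    with nonneg[of "(a + 1) / (2 * q)"] True show False by (simp add: field_simps)
  qed
next
  case False
  with \<open>0 \<le> b\<close> have "0 < b" by simp
  with nonneg[of "1 / b"] show ?thesis by (simp add: field_simps power2_eq_square)
qed

lemma psd_cauchy_schwarz:
  assumes A: "psd d A" and x: "x \<in> carrier_vec d" and y: "y \<in> carrier_vec d"
  shows "(cmod ((A *\<^sub>v x) \<bullet>c y))\<^sup>2 \<le> Re ((A *\<^sub>v x) \<bullet>c x) * Re ((A *\<^sub>v y) \<bullet>c y)"
proof (rule le_mult_of_quadratic_nonneg)
  have H: "hermitian d A" and Ad: "A \<in> carrier_mat d d" using A by (simp_all add: psd_hermitian psd_carrier)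
  define z where "z = (A *\<^sub>v x) \<bullet>c y"
  fix t :: real
  define c where "c = - complex_of_real t * z"
  have "0 \<le> Re ((A *\<^sub>v (x + c \<cdot>\<^sub>v y)) \<bullet>c (x + c \<cdot>\<^sub>v y))"
    using A x y by (simp add: psd_form_nonneg)
  also have "(A *\<^sub>v (x + c \<cdot>\<^sub>v y)) \<bullet>c (x + c \<cdot>\<^sub>v y)
      = (A *\<^sub>v x) \<bullet>c x - 2 * t * (z * cnj z) + t\<^sup>2 * (z * cnj z) * ((A *\<^sub>v y) \<bullet>c y)"
    using cscalar_prod_mult_mat_vec_add_smult[OF Ad x y, of c] hermitian_cscalar_prod_swap[OF H y x]
    by (simp add: c_def z_def[symmetric] power2_eq_square algebra_simps)
  also have "Re \<dots> = Re ((A *\<^sub>v x) \<bullet>c x) - 2 * t * (cmod z)\<^sup>2 + t\<^sup>2 * (cmod z)\<^sup>2 * Re ((A *\<^sub>v y) \<bullet>c y)"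
    using hermitian_form_real[OF H y] by (simp add: complex_mult_cnj cmod_power2)
  finally show "0 \<le> Re ((A *\<^sub>v x) \<bullet>c x) - 2 * t * (cmod z)\<^sup>2 + t\<^sup>2 * (cmod z)\<^sup>2 * Re ((A *\<^sub>v y) \<bullet>c y)" .
qed (use A y psd_form_nonneg in auto)

lemma cscalar_prod_mult_unit_vec:
  fixes A :: "complex mat"
  assumes "A \<in> carrier_mat d d" "i < d" "j < d"
  shows "(A *\<^sub>v unit_vec d j) \<bullet>c unit_vec d i = A $$ (i, j)"
proof -
  have delta: "(if P then 1 else 0) * z = (if P then z else 0)" "z * (if P then 1 else 0) = (if P then z else 0)"
    for P and z :: complex by simp_all
  show ?thesis
    using assms by (simp add: cscalar_prod_mult_mat_vec[of A d] if_distrib[of cnj] delta cong: if_cong)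
qed

lemma Re_cscalar_prod_self_nonneg: "v \<in> carrier_vec d \<Longrightarrow> 0 \<le> Re (v \<bullet>c v)"
  by (simp add: cscalar_prod_sum sum_nonneg)

lemma psd_diag_nonneg: "psd d A \<Longrightarrow> i < d \<Longrightarrow> 0 \<le> Re (A $$ (i, i))"
  using psd_form_nonneg[of d A "unit_vec d i"] cscalar_prod_mult_unit_vec[of A d i i]
  by (simp add: psd_def hermitian_def)

lemma psd_mtrace_nonneg:
  assumes "psd d A"
  shows "0 \<le> Re (mtrace A)"
proof -
  have "0 \<le> (\<Sum>i<d. Re (A $$ (i, i)))"
    using psd_diag_nonneg[OF assms] by (auto intro: sum_nonneg)
  then show ?thesis using carrier_matD[OF psd_carrier[OF assms]] by (simp add: mtrace_def)
qed

lemma psd_mtrace_zero: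
  assumes A: "psd d A" and tr: "mtrace A = 0"
  shows "A = 0\<^sub>m d d"
proof -
  have Ad: "A \<in> carrier_mat d d" using A by (rule psd_carrier)
  have "(\<Sum>i<d. Re (A $$ (i, i))) = 0"
    using arg_cong[OF tr, of Re] carrier_matD[OF Ad] by (simp add: mtrace_def)
  then have diag: "Re (A $$ (i, i)) = 0" if "i < d" for i
    using that psd_diag_nonneg[OF A] sum_nonneg_eq_0_iff[of "{..<d}" "\<lambda>i. Re (A $$ (i, i))"] by auto
  have "A $$ (i, j) = 0" if "i < d" "j < d" for i j
  proof -
    have "(cmod (A $$ (i, j)))\<^sup>2 \<le> Re (A $$ (j, j)) * Re (A $$ (i, i))"
      using psd_cauchy_schwarz[OF A, of "unit_vec d j" "unit_vec d i"] that Ad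
      by (simp add: cscalar_prod_mult_unit_vec)
    then show ?thesis using diag that by simp
  qed
  then show ?thesis using Ad by (intro eq_matI) auto
qed

lemma psd_smult:
  assumes A: "psd d A" and c: "0 \<le> c"
  shows "psd d (complex_of_real c \<cdot>\<^sub>m A)"
proof (rule psdI)
  show "hermitian d (complex_of_real c \<cdot>\<^sub>m A)"
    using hermitian_carrier[OF psd_hermitian[OF A]] hermitian_cnj_index[OF psd_hermitian[OF A]]
    unfolding hermitian_iff by simp
  fix v :: "complex vec" assume v: "v \<in> carrier_vec d"
  have "(complex_of_real c \<cdot>\<^sub>m A *\<^sub>v v) \<bullet>c v = complex_of_real c * ((A *\<^sub>v v) \<bullet>c v)"
    using psd_carrier[OF A] carrier_matD[OF psd_carrier[OF A]] v
    by (simp add: cscalar_prod_mult_mat_vec[of _ d] sum_distrib_left mult_ac)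
  then show "0 \<le> Re ((complex_of_real c \<cdot>\<^sub>m A *\<^sub>v v) \<bullet>c v)"
    using psd_form_nonneg[OF A v] c by simp
qed

lemma psd_one_mat: "psd d (1\<^sub>m d)"
  by (rule psdI) (auto simp: hermitian_iff Re_cscalar_prod_self_nonneg)

lemma psd_proj:
  assumes x: "x \<in> carrier_vec d"
  shows "psd d (proj x)"
proof (rule psdI)
  show "hermitian d (proj x)" using x by (auto simp: hermitian_iff proj_def)
  fix v :: "complex vec" assume v: "v \<in> carrier_vec d"
  have "(proj x *\<^sub>v v) \<bullet>c v = (v \<bullet>c x) * cnj (v \<bullet>c x)"
    using x v by (simp add: proj_mult_vec cscalar_prod_swap[of x d v])
  then show "0 \<le> Re ((proj x *\<^sub>v v) \<bullet>c v)" by (simp add: complex_mult_cnj)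
qed

definition orthonormal :: "nat \<Rightarrow> nat \<Rightarrow> (nat \<Rightarrow> complex vec) \<Rightarrow> bool" where
  "orthonormal d k f \<longleftrightarrow>
     (\<forall>l<k. f l \<in> carrier_vec d) \<and> (\<forall>l<k. \<forall>l'<k. f l \<bullet>c f l' = (if l = l' then 1 else 0))"

lemma orthonormal_carrier: "orthonormal d k f \<Longrightarrow> l < k \<Longrightarrow> f l \<in> carrier_vec d"
  by (simp add: orthonormal_def)

definition span_proj :: "nat \<Rightarrow> nat \<Rightarrow> (nat \<Rightarrow> complex vec) \<Rightarrow> complex mat" where
  "span_proj d k f = mat d d (\<lambda>(i, j). \<Sum>l<k. f l $ i * cnj (f l $ j))"

lemma span_proj_carrier [simp]: "span_proj d k f \<in> carrier_mat d d"
  by (simp add: span_proj_def)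

lemma dim_span_proj [simp]: "dim_row (span_proj d k f) = d" "dim_col (span_proj d k f) = d"
  by (simp_all add: span_proj_def)

lemma span_proj_mult_vec:
  assumes "\<And>l. l < k \<Longrightarrow> f l \<in> carrier_vec d" "v \<in> carrier_vec d"
  shows "span_proj d k f *\<^sub>v v = vec d (\<lambda>i. \<Sum>l<k. (v \<bullet>c f l) * f l $ i)"
proof (rule eq_vecI)
  fix i assume "i < dim_vec (vec d (\<lambda>i. \<Sum>l<k. (v \<bullet>c f l) * f l $ i))"
  then have i: "i < d" by simp
  have "(span_proj d k f *\<^sub>v v) $ i = (\<Sum>j<d. \<Sum>l<k. f l $ i * cnj (f l $ j) * v $ j)"
    using assms i by (simp add: span_proj_def scalar_prod_def atLeast0LessThan sum_distrib_right)
  also have "\<dots> = (\<Sum>l<k. \<Sum>j<d. f l $ i * cnj (f l $ j) * v $ j)"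
    by (rule sum.swap)
  also have "\<dots> = vec d (\<lambda>i. \<Sum>l<k. (v \<bullet>c f l) * f l $ i) $ i"
    using assms i by (simp add: cscalar_prod_sum[of _ d] sum_distrib_left sum_distrib_right mult_ac)
  finally show "(span_proj d k f *\<^sub>v v) $ i = vec d (\<lambda>i. \<Sum>l<k. (v \<bullet>c f l) * f l $ i) $ i" .
qed (simp add: span_proj_def)

lemma span_proj_form:
  assumes "\<And>l. l < k \<Longrightarrow> f l \<in> carrier_vec d" "v \<in> carrier_vec d"
  shows "(span_proj d k f *\<^sub>v v) \<bullet>c v = (\<Sum>l<k. (v \<bullet>c f l) * cnj (v \<bullet>c f l))"
  using assms by (simp add: span_proj_mult_vec cscalar_prod_lincomb cscalar_prod_swap[of _ d v])

lemma hermitian_span_proj: "hermitian d (span_proj d k f)"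
  by (auto simp: hermitian_iff span_proj_def mult.commute)

lemma psd_span_proj:
  assumes "\<And>l. l < k \<Longrightarrow> f l \<in> carrier_vec d"
  shows "psd d (span_proj d k f)"
  using assms by (intro psdI hermitian_span_proj) (simp add: span_proj_form complex_mult_cnj sum_nonneg)

lemma bessel_inequality:
  assumes on: "orthonormal d k f" and v: "v \<in> carrier_vec d"
  shows "(\<Sum>l<k. (cmod (v \<bullet>c f l))\<^sup>2) \<le> Re (v \<bullet>c v)"
proof -
  define b where "b l = v \<bullet>c f l" for l
  define u where "u = vec d (\<lambda>i. \<Sum>l<k. b l * f l $ i)"
  define S where "S = (\<Sum>l<k. (cmod (b l))\<^sup>2)"
  have f: "\<And>l. l < k \<Longrightarrow> f l \<in> carrier_vec d" and u: "u \<in> carrier_vec d"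
    using on by (simp_all add: orthonormal_def u_def)
  have ub: "u \<bullet>c f l = b l" if "l < k" for l
    using on that unfolding u_def
    by (simp add: cscalar_prod_lincomb[OF f f] orthonormal_def if_distrib[of "\<lambda>z. _ * z"] cong: if_cong)
  have "u \<bullet>c v = (\<Sum>l<k. b l * cnj (b l))"
    unfolding u_def using f v by (simp add: cscalar_prod_lincomb cscalar_prod_swap[of _ d v] b_def)
  then have uv: "u \<bullet>c v = of_real S"
    by (simp add: S_def flip: complex_norm_square)
  have "u \<bullet>c u = (\<Sum>l<k. b l * (f l \<bullet>c u))"
    using cscalar_prod_lincomb[of k f d u b] f u by (simp flip: u_def)
  also have "\<dots> = (\<Sum>l<k. b l * cnj (b l))"
    using f u ub cscalar_prod_swap[of u d] by (intro sum.cong) auto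
  also have "\<dots> = of_real S"
    by (simp add: S_def flip: complex_norm_square)
  finally have uu: "u \<bullet>c u = of_real S" .
  have "0 \<le> S" by (simp add: S_def sum_nonneg)
  moreover have "S\<^sup>2 \<le> S * Re (v \<bullet>c v)"
    using psd_cauchy_schwarz[OF psd_one_mat u v] u v \<open>0 \<le> S\<close> by (simp add: uv uu)
  ultimately show ?thesis
    using Re_cscalar_prod_self_nonneg[OF v]
    by (cases "S = 0") (auto simp: S_def b_def power2_eq_square)
qed

lemma psd_one_minus_span_proj:
  assumes on: "orthonormal d k f"
  shows "psd d (1\<^sub>m d - span_proj d k f)"
proof (rule psdI)
  show "hermitian d (1\<^sub>m d - span_proj d k f)"
    by (auto simp: hermitian_iff span_proj_def mult.commute)
  fix v :: "complex vec" assume v: "v \<in> carrier_vec d"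
  have Pv: "span_proj d k f *\<^sub>v v \<in> carrier_vec d" by (rule mult_mat_vec_carrier[OF span_proj_carrier v])
  have "((1\<^sub>m d - span_proj d k f) *\<^sub>v v) \<bullet>c v = (v - span_proj d k f *\<^sub>v v) \<bullet>c v"
    using v by (simp add: minus_mult_distrib_mat_vec[of _ d d])
  also have "\<dots> = v \<bullet>c v - (span_proj d k f *\<^sub>v v) \<bullet>c v"
    by (rule minus_scalar_prod_distrib[OF v Pv carrier_vec_conjugate[OF v]])
  also have "\<dots> = v \<bullet>c v - (\<Sum>l<k. (v \<bullet>c f l) * cnj (v \<bullet>c f l))"
    using on v by (simp add: span_proj_form orthonormal_carrier)
  finally show "0 \<le> Re (((1\<^sub>m d - span_proj d k f) *\<^sub>v v) \<bullet>c v)"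
    using bessel_inequality[OF on v] by (simp add: complex_mult_cnj cmod_power2)
qed

section \<open>Entanglement witnesses\<close>

lemma ent_witness_carrier: "ent_witness m n W \<Longrightarrow> W \<in> carrier_mat (m * n) (m * n)"
  by (simp add: ent_witness_def hermitian_def)

lemma separable_kron:
  assumes "density_op m A" "density_op n B"
  shows "separable m n (kron_mat A B)"
proof -
  have "kron_mat A B \<in> carrier_mat (m * n) (m * n)"
    using assms by (simp add: density_op_def psd_carrier)
  then have "kron_mat A B = mat (m * n) (m * n) (\<lambda>(i, j). \<Sum>l<(1::nat). complex_of_real 1 * kron_mat A B $$ (i, j))"
    by (intro eq_matI) auto
  with assms show ?thesis
    unfolding separable_def by (intro exI[of _ 1] exI[of _ "\<lambda>_. 1"] exI[of _ "\<lambda>_. A"] exI[of _ "\<lambda>_. B"]) auto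
qed

lemma ent_witnessI:
  assumes herm: "hermitian (m * n) W"
    and kron_nonneg: "\<And>A B. density_op m A \<Longrightarrow> density_op n B \<Longrightarrow> 0 \<le> Re (mtrace (W * kron_mat A B))"
  shows "ent_witness m n W"
  unfolding ent_witness_def
proof (intro conjI allI impI herm)
  fix \<sigma> assume "separable m n \<sigma>"
  then obtain K and p :: "nat \<Rightarrow> real" and \<sigma>A \<sigma>B
    where dens: "\<forall>l<K. 0 \<le> p l \<and> density_op m (\<sigma>A l) \<and> density_op n (\<sigma>B l)"
      and \<sigma>: "\<sigma> = mat (m * n) (m * n)
                 (\<lambda>(i, j). \<Sum>l<K. complex_of_real (p l) * kron_mat (\<sigma>A l) (\<sigma>B l) $$ (i, j))"
    unfolding separable_def by blast
  have "mtrace (W * \<sigma>) = (\<Sum>l<K. complex_of_real (p l) * mtrace (W * kron_mat (\<sigma>A l) (\<sigma>B l)))"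
    unfolding \<sigma> using herm dens
    by (intro mtrace_mult_lincomb) (auto simp: hermitian_def density_op_def psd_def)
  then have "Re (mtrace (W * \<sigma>)) = (\<Sum>l<K. p l * Re (mtrace (W * kron_mat (\<sigma>A l) (\<sigma>B l))))"
    by simp
  also have "\<dots> \<ge> 0"
    using dens kron_nonneg by (auto intro!: sum_nonneg)
  finally show "0 \<le> Re (mtrace (W * \<sigma>))" .
qed

lemma ent_witness_kron_psd:
  assumes W: "ent_witness m n W" and A: "psd m A" and B: "psd n B"
  shows "0 \<le> Re (mtrace (W * kron_mat A B))"
proof -
  have Wc: "W \<in> carrier_mat (m * n) (m * n)" using W by (rule ent_witness_carrier)
  define \<alpha> \<beta> where "\<alpha> = Re (mtrace A)" and "\<beta> = Re (mtrace B)"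
  have trA: "mtrace A = of_real \<alpha>" and trB: "mtrace B = of_real \<beta>"
    using hermitian_mtrace_real[OF psd_hermitian[OF A]] hermitian_mtrace_real[OF psd_hermitian[OF B]]
    by (simp_all add: \<alpha>_def \<beta>_def complex_eq_iff)
  show ?thesis
  proof (cases "\<alpha> = 0 \<or> \<beta> = 0")
    case True
    then have "A = 0\<^sub>m m m \<or> B = 0\<^sub>m n n"
      using psd_mtrace_zero[OF A] psd_mtrace_zero[OF B] trA trB by auto
    then have "kron_mat A B = 0\<^sub>m (m * n) (m * n)"
      using psd_carrier[OF A] psd_carrier[OF B] div_mod_less_mult by (auto simp: kron_mat_def)
    then show ?thesis using Wc by (simp add: mtrace_def)
  next
    case False
    then have \<alpha>: "0 < \<alpha>" and \<beta>: "0 < \<beta>"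
      using psd_mtrace_nonneg[OF A] psd_mtrace_nonneg[OF B] by (auto simp: \<alpha>_def \<beta>_def)
    have "density_op m (of_real (1 / \<alpha>) \<cdot>\<^sub>m A)" "density_op n (of_real (1 / \<beta>) \<cdot>\<^sub>m B)"
      using psd_smult[OF A, of "1 / \<alpha>"] psd_smult[OF B, of "1 / \<beta>"] \<alpha> \<beta> trA trB A B
      by (simp_all add: density_op_def mtrace_smult[of _ m] mtrace_smult[of _ n] psd_carrier)
    then have "0 \<le> Re (mtrace (W * kron_mat (of_real (1 / \<alpha>) \<cdot>\<^sub>m A) (of_real (1 / \<beta>) \<cdot>\<^sub>m B)))"
      using W by (simp add: ent_witness_def separable_kron)
    also have "mtrace (W * kron_mat (of_real (1 / \<alpha>) \<cdot>\<^sub>m A) (of_real (1 / \<beta>) \<cdot>\<^sub>m B))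
        = of_real (1 / (\<alpha> * \<beta>)) * mtrace (W * kron_mat A B)"
      using Wc psd_carrier[OF A] psd_carrier[OF B]
      by (simp add: kron_mat_smult mult_smult_distrib[of W "m * n" "m * n" _ "m * n"] mtrace_smult[of _ "m * n"])
    finally show ?thesis using mult_pos_pos[OF \<alpha> \<beta>] by (auto simp: zero_le_divide_iff)
  qed
qed

lemma ent_witness_product_vec:
  assumes W: "ent_witness m n W" and x: "x \<in> carrier_vec m" and y: "y \<in> carrier_vec n"
  shows "0 \<le> Re ((W *\<^sub>v kron_vec x y) \<bullet>c kron_vec x y)"
  using ent_witness_kron_psd[OF W psd_proj[OF x] psd_proj[OF y]] x y
  by (simp add: kron_mat_proj mtrace_mult_proj[OF ent_witness_carrier[OF W]])

lemma kron_span_proj_index: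
  assumes e: "\<And>i. i < k \<Longrightarrow> e i \<in> carrier_vec m" and f: "\<And>j. j < k \<Longrightarrow> f j \<in> carrier_vec n"
    and p: "p < m * n" and q: "q < m * n"
  shows "kron_mat (span_proj m k e) (span_proj n k f) $$ (p, q)
    = (\<Sum>i<k. \<Sum>j<k. proj (kron_vec (e i) (f j)) $$ (p, q))"
proof -
  have "kron_mat (span_proj m k e) (span_proj n k f) $$ (p, q)
      = (\<Sum>i<k. e i $ (p div n) * cnj (e i $ (q div n))) * (\<Sum>j<k. f j $ (p mod n) * cnj (f j $ (q mod n)))"
    using p q div_mod_less_mult[OF p] div_mod_less_mult[OF q]
    by (simp add: kron_mat_index[of _ m m _ n n] span_proj_def)
  also have "\<dots> = (\<Sum>i<k. \<Sum>j<k. proj (kron_vec (e i) (f j)) $$ (p, q))"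
    using e f p q by (simp add: sum_product proj_index[of _ "m * n"] kron_vec_index[of _ m _ n] mult_ac)
  finally show ?thesis .
qed

lemma mtrace_mult_kron_span_proj:
  assumes W: "W \<in> carrier_mat (m * n) (m * n)"
    and e: "\<And>i. i < k \<Longrightarrow> e i \<in> carrier_vec m" and f: "\<And>j. j < k \<Longrightarrow> f j \<in> carrier_vec n"
  shows "mtrace (W * kron_mat (span_proj m k e) (span_proj n k f))
    = (\<Sum>i<k. \<Sum>j<k. (W *\<^sub>v kron_vec (e i) (f j)) \<bullet>c kron_vec (e i) (f j))"
proof -
  define g where "g l = kron_vec (e (fst l)) (f (snd l))" for l
  have g: "g l \<in> carrier_vec (m * n)" if "l \<in> {..<k} \<times> {..<k}" for l
    using that e f by (auto simp: g_def)
  have "kron_mat (span_proj m k e) (span_proj n k f)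
      = mat (m * n) (m * n) (\<lambda>(p, q). \<Sum>l\<in>{..<k} \<times> {..<k}. proj (g l) $$ (p, q))"
    by (intro eq_matI) (simp_all add: kron_span_proj_index[OF e f] g_def sum.cartesian_product split_def)
  then have "mtrace (W * kron_mat (span_proj m k e) (span_proj n k f))
      = (\<Sum>l\<in>{..<k} \<times> {..<k}. mtrace (W * proj (g l)))"
    using g by (simp add: mtrace_mult_lincomb[OF W, where c = "\<lambda>_. 1", simplified])
  also have "\<dots> = (\<Sum>l\<in>{..<k} \<times> {..<k}. (W *\<^sub>v g l) \<bullet>c g l)"
    using g by (simp add: mtrace_mult_proj[OF W])
  finally have "mtrace (W * kron_mat (span_proj m k e) (span_proj n k f))
      = (\<Sum>l\<in>{..<k} \<times> {..<k}. (W *\<^sub>v g l) \<bullet>c g l)" .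
  then show ?thesis by (simp add: g_def sum.cartesian_product split_def)
qed

lemma ent_witness_sum_product_le_mtrace:
  assumes W: "ent_witness m n W" and e: "orthonormal m k e" and f: "orthonormal n k f"
  shows "(\<Sum>i<k. \<Sum>j<k. Re ((W *\<^sub>v kron_vec (e i) (f j)) \<bullet>c kron_vec (e i) (f j))) \<le> Re (mtrace W)"
proof -
  let ?E = "span_proj m k e" and ?F = "span_proj n k f"
  have Wc: "W \<in> carrier_mat (m * n) (m * n)" using W by (rule ent_witness_carrier)
  have E: "?E \<in> carrier_mat m m" and F: "?F \<in> carrier_mat n n" by simp_all
  have psdE: "psd m ?E" and psdF: "psd n ?F"
    using e f by (simp_all add: psd_span_proj orthonormal_carrier)
  have "mtrace (W * kron_mat ?E (1\<^sub>m n - ?F)) = mtrace (W * kron_mat ?E (1\<^sub>m n)) - mtrace (W * kron_mat ?E ?F)"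
    using Wc E F by (simp add: kron_mat_diff_right[OF E one_carrier_mat F] mtrace_mult_diff[OF Wc])
  then have "Re (mtrace (W * kron_mat ?E ?F)) \<le> Re (mtrace (W * kron_mat ?E (1\<^sub>m n)))"
    using ent_witness_kron_psd[OF W psdE psd_one_minus_span_proj[OF f]] by simp
  also have "mtrace (W * kron_mat (1\<^sub>m m - ?E) (1\<^sub>m n))
      = mtrace (W * kron_mat (1\<^sub>m m) (1\<^sub>m n)) - mtrace (W * kron_mat ?E (1\<^sub>m n))"
    using Wc E by (simp add: kron_mat_diff_left[OF one_carrier_mat E one_carrier_mat] mtrace_mult_diff[OF Wc])
  then have "Re (mtrace (W * kron_mat ?E (1\<^sub>m n))) \<le> Re (mtrace (W * kron_mat (1\<^sub>m m) (1\<^sub>m n)))"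
    using ent_witness_kron_psd[OF W psd_one_minus_span_proj[OF e] psd_one_mat] by simp
  also have "\<dots> = Re (mtrace W)"
    using Wc by (simp add: kron_mat_one)
  finally show ?thesis
    using Wc e f by (simp add: mtrace_mult_kron_span_proj orthonormal_carrier)
qed

lemma ent_witness_proj_kron_vec:
  assumes x: "x \<in> carrier_vec m" and y: "y \<in> carrier_vec n"
  shows "ent_witness m n (proj (kron_vec x y))"
proof (rule ent_witnessI)
  show "hermitian (m * n) (proj (kron_vec x y))"
    using x y by (simp add: psd_hermitian psd_proj)
  fix A B assume "density_op m A" "density_op n B"
  then have A: "psd m A" and B: "psd n B" by (simp_all add: density_op_def)
  have "mtrace (proj (kron_vec x y) * kron_mat A B) = ((A *\<^sub>v x) \<bullet>c x) * ((B *\<^sub>v y) \<bullet>c y)"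
    using x y psd_carrier[OF A] psd_carrier[OF B]
    by (simp add: outer_self[symmetric] mtrace_outer_mult[of _ "m * n"] cscalar_prod_kron_mult)
  then show "0 \<le> Re (mtrace (proj (kron_vec x y) * kron_mat A B))"
    using x y psd_form_nonneg[OF A x] psd_form_nonneg[OF B y]
      hermitian_form_real[OF psd_hermitian[OF A] x] hermitian_form_real[OF psd_hermitian[OF B] y]
    by simp
qed

lemma two_Re_mult_le:
  fixes a0 a1 b0 b1 :: real and z w :: complex
  assumes "0 \<le> a0" "0 \<le> a1" "0 \<le> b0" "0 \<le> b1"
    and z: "(cmod z)\<^sup>2 \<le> a0 * a1" and w: "(cmod w)\<^sup>2 \<le> b0 * b1"
  shows "2 * Re (z * w) \<le> a0 * b1 + a1 * b0"
proof -
  have "Re (z * w) \<le> cmod z * cmod w"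
    using complex_Re_le_cmod[of "z * w"] by (simp add: norm_mult)
  also have "\<dots> \<le> sqrt (a0 * a1) * sqrt (b0 * b1)"
    using assms by (intro mult_mono real_le_rsqrt) auto
  also have "\<dots> = sqrt ((a0 * b1) * (a1 * b0))"
    by (simp add: real_sqrt_mult[symmetric] mult_ac)
  also have "\<dots> \<le> (a0 * b1 + a1 * b0) / 2"
    using assms by (intro arith_geo_mean_sqrt) auto
  finally show ?thesis by simp
qed

text \<open>The partial transpose of the projector onto the singlet \<open>(x0 \<otimes> y1 - x1 \<otimes> y0) / \<surd>2\<close>.\<close>
definition singlet_witness :: "complex vec \<Rightarrow> complex vec \<Rightarrow> complex vec \<Rightarrow> complex vec \<Rightarrow> complex mat" where
  "singlet_witness x0 x1 y0 y1 = (1 / 2) \<cdot>\<^sub>m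
     (outer (kron_vec x0 y1) (kron_vec x0 y1) + outer (kron_vec x1 y0) (kron_vec x1 y0)
      - outer (kron_vec x0 y0) (kron_vec x1 y1) - outer (kron_vec x1 y1) (kron_vec x0 y0))"

lemma singlet_witness_carrier [simp]:
  assumes "x0 \<in> carrier_vec m" "x1 \<in> carrier_vec m" "y0 \<in> carrier_vec n" "y1 \<in> carrier_vec n"
  shows "singlet_witness x0 x1 y0 y1 \<in> carrier_mat (m * n) (m * n)"
  using assms by (simp add: singlet_witness_def minus_carrier_mat)

lemma hermitian_singlet_witness:
  assumes "x0 \<in> carrier_vec m" "x1 \<in> carrier_vec m" "y0 \<in> carrier_vec n" "y1 \<in> carrier_vec n"
  shows "hermitian (m * n) (singlet_witness x0 x1 y0 y1)"
  using assms carrier_vecD[OF assms(1)] carrier_vecD[OF assms(2)] carrier_vecD[OF assms(3)]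
    carrier_vecD[OF assms(4)]
  by (auto simp: hermitian_iff singlet_witness_def outer_index[of _ "m * n"] minus_carrier_mat mult.commute)

lemma mtrace_singlet_witness_mult:
  assumes x: "x0 \<in> carrier_vec m" "x1 \<in> carrier_vec m" and y: "y0 \<in> carrier_vec n" "y1 \<in> carrier_vec n"
    and S: "S \<in> carrier_mat (m * n) (m * n)"
  shows "mtrace (singlet_witness x0 x1 y0 y1 * S) =
    ((S *\<^sub>v kron_vec x0 y1) \<bullet>c kron_vec x0 y1 + (S *\<^sub>v kron_vec x1 y0) \<bullet>c kron_vec x1 y0
     - (S *\<^sub>v kron_vec x0 y0) \<bullet>c kron_vec x1 y1 - (S *\<^sub>v kron_vec x1 y1) \<bullet>c kron_vec x0 y0) / 2"
proof -
  have "mtrace (singlet_witness x0 x1 y0 y1 * S) =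
      (mtrace (outer (kron_vec x0 y1) (kron_vec x0 y1) * S) + mtrace (outer (kron_vec x1 y0) (kron_vec x1 y0) * S)
       - mtrace (outer (kron_vec x0 y0) (kron_vec x1 y1) * S) - mtrace (outer (kron_vec x1 y1) (kron_vec x0 y0) * S)) / 2"
    using x y S carrier_vecD[OF x(1)] carrier_vecD[OF x(2)] carrier_vecD[OF y(1)] carrier_vecD[OF y(2)]
    by (simp add: singlet_witness_def mtrace_mult[of _ "m * n"] outer_index[of _ "m * n"] minus_carrier_mat
        algebra_simps sum.distrib sum_subtractf flip: sum_divide_distrib)
  then show ?thesis
    using x y S by (simp add: mtrace_outer_mult[of S "m * n"])
qed

lemma ent_witness_singlet_witness:
  assumes x: "x0 \<in> carrier_vec m" "x1 \<in> carrier_vec m" and y: "y0 \<in> carrier_vec n" "y1 \<in> carrier_vec n"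
  shows "ent_witness m n (singlet_witness x0 x1 y0 y1)"
proof (rule ent_witnessI[OF hermitian_singlet_witness[OF x y]])
  fix A B assume "density_op m A" "density_op n B"
  then have A: "psd m A" and B: "psd n B" by (simp_all add: density_op_def)
  have Ac: "A \<in> carrier_mat m m" and Bc: "B \<in> carrier_mat n n" using A B by (simp_all add: psd_carrier)
  define \<alpha> where "\<alpha> i j = (A *\<^sub>v i) \<bullet>c j" for i j
  define \<beta> where "\<beta> i j = (B *\<^sub>v i) \<bullet>c j" for i j
  have "mtrace (singlet_witness x0 x1 y0 y1 * kron_mat A B)
      = (\<alpha> x0 x0 * \<beta> y1 y1 + \<alpha> x1 x1 * \<beta> y0 y0 - \<alpha> x0 x1 * \<beta> y0 y1 - \<alpha> x1 x0 * \<beta> y1 y0) / 2"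
    using x y Ac Bc by (simp add: mtrace_singlet_witness_mult cscalar_prod_kron_mult \<alpha>_def \<beta>_def)
  also have "\<alpha> x1 x0 * \<beta> y1 y0 = cnj (\<alpha> x0 x1 * \<beta> y0 y1)"
    using hermitian_cscalar_prod_swap[OF psd_hermitian[OF A] x(2) x(1)]
      hermitian_cscalar_prod_swap[OF psd_hermitian[OF B] y(2) y(1)]
    by (simp add: \<alpha>_def \<beta>_def)
  finally have "mtrace (singlet_witness x0 x1 y0 y1 * kron_mat A B)
      = (\<alpha> x0 x0 * \<beta> y1 y1 + \<alpha> x1 x1 * \<beta> y0 y0 - \<alpha> x0 x1 * \<beta> y0 y1 - cnj (\<alpha> x0 x1 * \<beta> y0 y1)) / 2" .
  then have "Re (mtrace (singlet_witness x0 x1 y0 y1 * kron_mat A B))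
      = Re ((\<alpha> x0 x0 * \<beta> y1 y1 + \<alpha> x1 x1 * \<beta> y0 y0 - \<alpha> x0 x1 * \<beta> y0 y1 - cnj (\<alpha> x0 x1 * \<beta> y0 y1)) / 2)"
    by (rule arg_cong)
  also have "\<dots> = (Re (\<alpha> x0 x0) * Re (\<beta> y1 y1) + Re (\<alpha> x1 x1) * Re (\<beta> y0 y0) - 2 * Re (\<alpha> x0 x1 * \<beta> y0 y1)) / 2"
    using x y hermitian_form_real[OF psd_hermitian[OF A]] hermitian_form_real[OF psd_hermitian[OF B]]
    by (simp add: \<alpha>_def \<beta>_def)
  finally have "Re (mtrace (singlet_witness x0 x1 y0 y1 * kron_mat A B))
      = (Re (\<alpha> x0 x0) * Re (\<beta> y1 y1) + Re (\<alpha> x1 x1) * Re (\<beta> y0 y0) - 2 * Re (\<alpha> x0 x1 * \<beta> y0 y1)) / 2" .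
  moreover have "2 * Re (\<alpha> x0 x1 * \<beta> y0 y1) \<le> Re (\<alpha> x0 x0) * Re (\<beta> y1 y1) + Re (\<alpha> x1 x1) * Re (\<beta> y0 y0)"
    using x y psd_form_nonneg[OF A] psd_form_nonneg[OF B] psd_cauchy_schwarz[OF A] psd_cauchy_schwarz[OF B]
    unfolding \<alpha>_def \<beta>_def by (intro two_Re_mult_le) auto
  ultimately show "0 \<le> Re (mtrace (singlet_witness x0 x1 y0 y1 * kron_mat A B))" by (simp add: field_simps)
qed

lemma normalized_EW_singlet_witness:
  assumes e: "orthonormal m k e" and f: "orthonormal n k f" and k: "2 \<le> k"
  shows "normalized_EW m n (singlet_witness (e 0) (e 1) (f 0) (f 1))"
proof -
  have x: "e 0 \<in> carrier_vec m" "e 1 \<in> carrier_vec m" and y: "f 0 \<in> carrier_vec n" "f 1 \<in> carrier_vec n"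
    using e f k by (simp_all add: orthonormal_carrier)
  have "mtrace (singlet_witness (e 0) (e 1) (f 0) (f 1))
      = mtrace (singlet_witness (e 0) (e 1) (f 0) (f 1) * 1\<^sub>m (m * n))"
    by (simp only: right_mult_one_mat[OF singlet_witness_carrier[OF x y]])
  also have "\<dots> = 1"
    using mtrace_singlet_witness_mult[OF x y one_carrier_mat] x y e f k
    by (simp add: cscalar_prod_kron_vec[of _ m _ _ n] orthonormal_def)
  finally show ?thesis using ent_witness_singlet_witness[OF x y] by (simp add: normalized_EW_def)
qed

section \<open>Twirling by phases with exponents in a Sidon set\<close>

definition root_of_unity :: "nat \<Rightarrow> int \<Rightarrow> complex" where
  "root_of_unity N d = cis (2 * pi * of_int d / real N)"

lemma root_of_unity_mult: "root_of_unity N a * root_of_unity N b = root_of_unity N (a + b)"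
  unfolding root_of_unity_def cis_mult by (simp add: add_divide_distrib distrib_left)

lemma cnj_root_of_unity: "cnj (root_of_unity N d) = root_of_unity N (- d)"
  by (simp add: root_of_unity_def cis_cnj)

lemma root_of_unity_power: "root_of_unity N d ^ r = root_of_unity N (int r * d)"
  unfolding root_of_unity_def DeMoivre by (simp add: algebra_simps)

lemma root_of_unity_eq_1_iff:
  assumes "0 < N"
  shows "root_of_unity N d = 1 \<longleftrightarrow> int N dvd d"
proof
  assume "root_of_unity N d = 1"
  then have "cos (2 * pi * of_int d / real N) = 1"
    unfolding root_of_unity_def by (metis cis.sel(1) one_complex.sel(1))
  then obtain z :: int where "2 * pi * of_int d / real N = of_int z * 2 * pi"
    using cos_one_2pi_int by blast
  then have "real_of_int d = real_of_int (z * int N)" using assms by (simp add: field_simps)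
  then show "int N dvd d" by (simp only: of_int_eq_iff) simp
next
  assume "int N dvd d"
  then obtain z where "d = int N * z" by blast
  then have "2 * pi * of_int d / real N = 2 * pi * of_int z" using assms by simp
  then show "root_of_unity N d = 1"
    unfolding root_of_unity_def by simp
qed

lemma sum_root_of_unity:
  assumes N: "0 < N"
  shows "(\<Sum>r<N. root_of_unity N (int r * d)) = (if int N dvd d then of_nat N else 0)"
proof (cases "int N dvd d")
  case True
  then have "root_of_unity N (int r * d) = 1" for r
    using N by (simp add: root_of_unity_eq_1_iff)
  with True show ?thesis by simp
next
  case False
  have "root_of_unity N d ^ N = 1"
    using N by (simp add: root_of_unity_power root_of_unity_eq_1_iff)
  then have "(\<Sum>r<N. root_of_unity N d ^ r) = 0"
    using False N geometric_sum[of "root_of_unity N d" N] by (simp add: root_of_unity_eq_1_iff)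
  with False show ?thesis by (simp add: root_of_unity_power)
qed

lemma power_two_sum_neq:
  fixes a b c d :: nat
  assumes "a \<le> b" "a < c" "a < d"
  shows "2 ^ a + 2 ^ b \<noteq> (2::nat) ^ c + 2 ^ d"
proof
  obtain b' c' d' where b: "b = a + b'" and c: "c = a + Suc c'" and d: "d = a + Suc d'"
    using assms by (metis add_Suc_right le_Suc_ex less_natE)
  assume "2 ^ a + 2 ^ b = (2::nat) ^ c + 2 ^ d"
  then have "2 ^ a * (1 + 2 ^ b') = 2 ^ a * ((2::nat) * (2 ^ c' + 2 ^ d'))"
    by (simp add: b c d power_add algebra_simps)
  then have eq: "1 + 2 ^ b' = (2::nat) * (2 ^ c' + 2 ^ d')"
    by (metis mult_left_cancel power_not_zero zero_neq_numeral)
  show False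
  proof (cases b')
    case 0
    with eq have "1 = (2::nat) ^ c' + 2 ^ d'" by simp
    moreover have "(1::nat) \<le> 2 ^ c'" "(1::nat) \<le> 2 ^ d'" by simp_all
    ultimately show False by linarith
  next
    case (Suc b'')
    with eq show False by (metis double_not_eq_Suc_double plus_1_eq_Suc power_Suc)
  qed
qed

lemma power_two_sum_sorted_eq:
  fixes a b c d :: nat
  assumes "a \<le> b" "c \<le> d" "2 ^ a + 2 ^ b = (2::nat) ^ c + 2 ^ d"
  shows "a = c \<and> b = d"
proof -
  have "a = c"
  proof (cases a c rule: linorder_cases)
    case less
    then show ?thesis using assms power_two_sum_neq[of a b c d] by simp
  next
    case greater
    then show ?thesis using assms power_two_sum_neq[of c d a b] by simp
  qed
  with assms show ?thesis by simp
qed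

lemma power_two_sum_eq:
  fixes a b c d :: nat
  assumes "2 ^ a + 2 ^ b = (2::nat) ^ c + 2 ^ d"
  shows "(a = c \<and> b = d) \<or> (a = d \<and> b = c)"
  using assms power_two_sum_sorted_eq[of a b c d] power_two_sum_sorted_eq[of b a c d]
    power_two_sum_sorted_eq[of a b d c] power_two_sum_sorted_eq[of b a d c]
  by (cases "a \<le> b"; cases "c \<le> d") (auto simp: add.commute)

definition twirl_phase :: "nat \<Rightarrow> nat \<Rightarrow> nat \<Rightarrow> complex" where
  "twirl_phase k r i = root_of_unity (2 ^ (k + 2)) (int r * 2 ^ i)"

lemma sum_twirl_phase_product:
  assumes "i < k" "j < k" "i' < k" "j' < k"
  shows "(\<Sum>r<2 ^ (k + 2). twirl_phase k r i * cnj (twirl_phase k r j) * cnj (twirl_phase k r i') * twirl_phase k r j')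
    = (if (i = j \<and> i' = j') \<or> (i = i' \<and> j = j') then 2 ^ (k + 2) else 0)"
proof -
  define \<delta> :: int where "\<delta> = 2 ^ i - 2 ^ j - 2 ^ i' + 2 ^ j'"
  have prod: "twirl_phase k r i * cnj (twirl_phase k r j) * cnj (twirl_phase k r i') * twirl_phase k r j'
      = root_of_unity (2 ^ (k + 2)) (int r * \<delta>)" for r
    by (simp add: twirl_phase_def cnj_root_of_unity root_of_unity_mult \<delta>_def algebra_simps)
  have bound: "0 < (2::int) ^ x \<and> (2::int) ^ x < 2 ^ k" if "x < k" for x
    using that by (simp add: power_strict_increasing)
  have "\<bar>\<delta>\<bar> < 2 ^ (k + 2)"
  proof -
    have "(2::int) ^ (k + 2) = 4 * 2 ^ k" by simp
    then show ?thesis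
      using bound[OF assms(1)] bound[OF assms(2)] bound[OF assms(3)] bound[OF assms(4)]
      unfolding \<delta>_def abs_less_iff by linarith
  qed
  then have "int (2 ^ (k + 2)) dvd \<delta> \<longleftrightarrow> \<delta> = 0"
    using dvd_imp_le_int[of \<delta> "int (2 ^ (k + 2))"] by auto
  also have "\<delta> = 0 \<longleftrightarrow> (2::nat) ^ i + 2 ^ j' = 2 ^ j + 2 ^ i'"
    unfolding \<delta>_def by (simp flip: of_nat_eq_iff[where 'a = int]) arith
  also have "\<dots> \<longleftrightarrow> (i = j \<and> i' = j') \<or> (i = i' \<and> j = j')"
    using power_two_sum_eq[of i j' j i'] by auto
  finally show ?thesis
    by (simp add: prod sum_root_of_unity)
qed

lemma sum_twirl_patterns:
  fixes T :: "nat \<Rightarrow> nat \<Rightarrow> nat \<Rightarrow> nat \<Rightarrow> complex"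
  shows "(\<Sum>i<k. \<Sum>j<k. \<Sum>i'<k. \<Sum>j'<k. if (i = j \<and> i' = j') \<or> (i = i' \<and> j = j') then T i j i' j' else 0)
    = (\<Sum>i<k. \<Sum>i'<k. T i i i' i') + (\<Sum>i<k. \<Sum>j<k. if i = j then 0 else T i j i j)"
proof -
  have split: "(if (i = j \<and> i' = j') \<or> (i = i' \<and> j = j') then T i j i' j' else 0)
      = (if i = j then if i' = j' then T i j i' j' else 0 else 0)
        + (if i = j then 0 else if i = i' then if j = j' then T i j i' j' else 0 else 0)"
    for i j i' j' by auto
  have sum_if: "(\<Sum>x\<in>S. if P then g x else 0) = (if P then sum g S else 0)"
      "(\<Sum>x\<in>S. if P then 0 else g x) = (if P then 0 else sum g S)"
    for P S and g :: "nat \<Rightarrow> complex" by simp_all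
  show ?thesis
    unfolding split sum.distrib by (simp add: sum_if cong: if_cong)
qed

lemma sum_product4:
  fixes A B C D :: "nat \<Rightarrow> 'a::comm_semiring_0"
  shows "(\<Sum>i<k. A i) * (\<Sum>j<k. B j) * (\<Sum>i'<k. C i') * (\<Sum>j'<k. D j')
    = (\<Sum>i<k. \<Sum>j<k. \<Sum>i'<k. \<Sum>j'<k. A i * B j * C i' * D j')"
proof -
  have "(\<Sum>i<k. \<Sum>j<k. \<Sum>i'<k. \<Sum>j'<k. A i * B j * C i' * D j')
      = (\<Sum>i<k. A i * (\<Sum>j<k. B j * (\<Sum>i'<k. C i' * (\<Sum>j'<k. D j'))))"
    by (simp add: sum_distrib_left mult.assoc)
  also have "\<dots> = (\<Sum>i<k. A i) * ((\<Sum>j<k. B j) * ((\<Sum>i'<k. C i') * (\<Sum>j'<k. D j')))"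
    by (simp add: sum_distrib_right)
  finally show ?thesis by (simp add: mult.assoc)
qed

text \<open>Averaging over \<open>r\<close> kills every term whose exponent \<open>2^i - 2^j - 2^i' + 2^j'\<close> is nonzero. As the
  powers of two form a Sidon set, only the terms with \<open>i = j, i' = j'\<close> (they assemble the Schmidt
  vector) and those with \<open>i = i', j = j'\<close> (product vectors) survive.\<close>
lemma sum_twirl_product:
  fixes c :: "nat \<Rightarrow> real" and X Y X' Y' :: "nat \<Rightarrow> complex"
  shows "(\<Sum>r<2 ^ (k + 2).
      (\<Sum>i<k. c i * twirl_phase k r i * X i) * (\<Sum>j<k. c j * cnj (twirl_phase k r j) * Y j)
      * cnj ((\<Sum>i<k. c i * twirl_phase k r i * X' i) * (\<Sum>j<k. c j * cnj (twirl_phase k r j) * Y' j)))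
    = 2 ^ (k + 2) * ((\<Sum>i<k. (c i)\<^sup>2 * X i * Y i) * cnj (\<Sum>i<k. (c i)\<^sup>2 * X' i * Y' i)
      + (\<Sum>i<k. \<Sum>j<k. (if i = j then 0 else (c i)\<^sup>2 * (c j)\<^sup>2) * (X i * Y j * cnj (X' i * Y' j))))"
  (is "?lhs = ?rhs")
proof -
  let ?N = "(2::nat) ^ (k + 2)" and ?\<phi> = "twirl_phase k"
  define T where "T i j i' j' = complex_of_real (c i * c j * c i' * c j') * (X i * Y j * cnj (X' i') * cnj (Y' j'))"
    for i j i' j'
  have "(\<Sum>i<k. c i * ?\<phi> r i * X i) * (\<Sum>j<k. c j * cnj (?\<phi> r j) * Y j)
      * cnj ((\<Sum>i<k. c i * ?\<phi> r i * X' i) * (\<Sum>j<k. c j * cnj (?\<phi> r j) * Y' j))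
    = (\<Sum>i<k. c i * ?\<phi> r i * X i) * (\<Sum>j<k. c j * cnj (?\<phi> r j) * Y j)
      * (\<Sum>i'<k. c i' * cnj (?\<phi> r i') * cnj (X' i')) * (\<Sum>j'<k. c j' * ?\<phi> r j' * cnj (Y' j'))" for r
    by (simp add: mult.assoc)
  also have "\<dots> r = (\<Sum>i<k. \<Sum>j<k. \<Sum>i'<k. \<Sum>j'<k.
      T i j i' j' * (?\<phi> r i * cnj (?\<phi> r j) * cnj (?\<phi> r i') * ?\<phi> r j'))" for r
    unfolding sum_product4 by (simp add: T_def mult_ac)
  finally have "?lhs = (\<Sum>r<?N. \<Sum>i<k. \<Sum>j<k. \<Sum>i'<k. \<Sum>j'<k.
      T i j i' j' * (?\<phi> r i * cnj (?\<phi> r j) * cnj (?\<phi> r i') * ?\<phi> r j'))"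
    by simp
  also have "\<dots> = (\<Sum>i<k. \<Sum>j<k. \<Sum>i'<k. \<Sum>j'<k.
      T i j i' j' * (\<Sum>r<?N. ?\<phi> r i * cnj (?\<phi> r j) * cnj (?\<phi> r i') * ?\<phi> r j'))"
    by (simp only: sum_distrib_left sum.swap[of _ "{..<?N}"])
  also have "\<dots> = (\<Sum>i<k. \<Sum>j<k. \<Sum>i'<k. \<Sum>j'<k.
      T i j i' j' * (if (i = j \<and> i' = j') \<or> (i = i' \<and> j = j') then 2 ^ (k + 2) else 0))"
    by (intro sum.cong refl) (simp only: lessThan_iff sum_twirl_phase_product)
  also have "\<dots> = (\<Sum>i<k. \<Sum>j<k. \<Sum>i'<k. \<Sum>j'<k.
      if (i = j \<and> i' = j') \<or> (i = i' \<and> j = j') then of_nat ?N * T i j i' j' else 0)"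
    by (intro sum.cong refl) (simp add: mult.commute)
  also have "\<dots> = of_nat ?N * ((\<Sum>i<k. \<Sum>i'<k. T i i i' i') + (\<Sum>i<k. \<Sum>j<k. if i = j then 0 else T i j i j))"
    unfolding sum_twirl_patterns by (simp add: sum_distrib_left distrib_left if_distrib[of "\<lambda>x. _ * x"] cong: if_cong)
  also have "(\<Sum>i<k. \<Sum>i'<k. T i i i' i') = (\<Sum>i<k. (c i)\<^sup>2 * X i * Y i) * cnj (\<Sum>i<k. (c i)\<^sup>2 * X' i * Y' i)"
    by (simp add: T_def sum_product power2_eq_square mult_ac)
  also have "(\<Sum>i<k. \<Sum>j<k. if i = j then 0 else T i j i j)
      = (\<Sum>i<k. \<Sum>j<k. (if i = j then 0 else (c i)\<^sup>2 * (c j)\<^sup>2) * (X i * Y j * cnj (X' i * Y' j)))"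
    by (intro sum.cong refl) (simp add: T_def power2_eq_square mult_ac)
  finally show ?thesis by simp
qed

lemma sum_proj_twirl_index:
  fixes c :: "nat \<Rightarrow> real"
  assumes x: "\<And>i. i < k \<Longrightarrow> x i \<in> carrier_vec m" and y: "\<And>i. i < k \<Longrightarrow> y i \<in> carrier_vec n"
    and p: "p < m * n" and q: "q < m * n"
  defines "u r \<equiv> vec m (\<lambda>s. \<Sum>i<k. c i * twirl_phase k r i * x i $ s)"
    and "v r \<equiv> vec n (\<lambda>t. \<Sum>j<k. c j * cnj (twirl_phase k r j) * y j $ t)"
    and "\<psi> \<equiv> vec (m * n) (\<lambda>p. \<Sum>i<k. complex_of_real ((c i)\<^sup>2) * kron_vec (x i) (y i) $ p)"
  shows "(\<Sum>r<2 ^ (k + 2). proj (kron_vec (u r) (v r)) $$ (p, q))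
    = 2 ^ (k + 2) * (proj \<psi> $$ (p, q) + (\<Sum>i<k. \<Sum>j<k.
        complex_of_real (if i = j then 0 else (c i)\<^sup>2 * (c j)\<^sup>2) * proj (kron_vec (x i) (y j)) $$ (p, q)))"
  using sum_twirl_product[where k = k and c = c and X = "\<lambda>i. x i $ (p div n)" and Y = "\<lambda>j. y j $ (p mod n)"
      and X' = "\<lambda>i. x i $ (q div n)" and Y' = "\<lambda>j. y j $ (q mod n)"] x y p q div_mod_less_mult[OF p] div_mod_less_mult[OF q]
  by (simp add: u_def v_def \<psi>_def proj_index[of _ "m * n"] kron_vec_index[of _ m _ n] mult_ac)

lemma sum_mtrace_twirl:
  fixes c :: "nat \<Rightarrow> real"
  assumes W: "W \<in> carrier_mat (m * n) (m * n)"
    and x: "\<And>i. i < k \<Longrightarrow> x i \<in> carrier_vec m" and y: "\<And>i. i < k \<Longrightarrow> y i \<in> carrier_vec n"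
  defines "u r \<equiv> vec m (\<lambda>s. \<Sum>i<k. c i * twirl_phase k r i * x i $ s)"
    and "v r \<equiv> vec n (\<lambda>t. \<Sum>j<k. c j * cnj (twirl_phase k r j) * y j $ t)"
    and "\<psi> \<equiv> vec (m * n) (\<lambda>p. \<Sum>i<k. complex_of_real ((c i)\<^sup>2) * kron_vec (x i) (y i) $ p)"
  shows "(\<Sum>r<2 ^ (k + 2). mtrace (W * proj (kron_vec (u r) (v r))))
    = 2 ^ (k + 2) * (mtrace (W * proj \<psi>) + (\<Sum>i<k. \<Sum>j<k.
        complex_of_real (if i = j then 0 else (c i)\<^sup>2 * (c j)\<^sup>2) * mtrace (W * proj (kron_vec (x i) (y j)))))"
proof -
  let ?N = "(2::nat) ^ (k + 2)" and ?L = "{..<k} \<times> {..<k}"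
  define g where "g l = kron_vec (x (fst l)) (y (snd l))" for l
  define w where "w l = complex_of_real (if fst l = snd l then 0 else (c (fst l))\<^sup>2 * (c (snd l))\<^sup>2)" for l
  define D where "D = mat (m * n) (m * n) (\<lambda>(p, q). \<Sum>l\<in>?L. w l * proj (g l) $$ (p, q))"
  have g: "g l \<in> carrier_vec (m * n)" if "l \<in> ?L" for l
    using that x y by (auto simp: g_def)
  have uv: "kron_vec (u r) (v r) \<in> carrier_vec (m * n)" for r
    by (simp add: u_def v_def)
  have \<psi>: "\<psi> \<in> carrier_vec (m * n)" by (simp add: \<psi>_def)
  have D: "D \<in> carrier_mat (m * n) (m * n)" by (simp add: D_def)
  have twirl: "mat (m * n) (m * n) (\<lambda>(p, q). \<Sum>r<?N. proj (kron_vec (u r) (v r)) $$ (p, q))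
      = of_nat ?N \<cdot>\<^sub>m (proj \<psi> + D)"
    using sum_proj_twirl_index[OF x y, where c = c] \<psi>
    by (intro eq_matI) (simp_all add: u_def v_def \<psi>_def D_def g_def w_def sum.cartesian_product split_def)
  have "(\<Sum>r<?N. mtrace (W * proj (kron_vec (u r) (v r))))
      = mtrace (W * mat (m * n) (m * n) (\<lambda>(p, q). \<Sum>r<?N. proj (kron_vec (u r) (v r)) $$ (p, q)))"
    using uv by (simp add: mtrace_mult_lincomb[OF W, where c = "\<lambda>_. 1", simplified])
  also have "\<dots> = of_nat ?N * (mtrace (W * proj \<psi>) + mtrace (W * D))"
    unfolding twirl using W \<psi> D by (simp add: mtrace_mult_smult mtrace_mult_add)
  also have "mtrace (W * D) = (\<Sum>l\<in>?L. w l * mtrace (W * proj (g l)))"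
    using g unfolding D_def by (simp add: mtrace_mult_lincomb[OF W])
  finally show ?thesis
    by (simp add: sum.cartesian_product split_def g_def w_def)
qed

section \<open>The witnessed entanglement of a pure state\<close>

lemma schmidt_coeff_product_le:
  fixes a :: "nat \<Rightarrow> real"
  assumes nonneg: "\<forall>i<k. 0 \<le> a i" and decr: "\<forall>i j. i \<le> j \<and> j < k \<longrightarrow> a j \<le> a i"
    and ij: "i < k" "j < k"
  shows "(if i = j then 0 else a i * a j) \<le> a 0 * (if 2 \<le> k then a 1 else 0)"
proof (cases "i = j")
  case True
  then show ?thesis using nonneg ij by auto
next
  case False
  have le: "a i' * a j' \<le> a 0 * a 1" if "i' < j'" "j' < k" for i' j'
    using nonneg decr that by (intro mult_mono) auto
  from False ij have "2 \<le> k" by linarith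
  moreover have "a i * a j \<le> a 0 * a 1"
    using False ij le[of i j] le[of j i] by (cases "i < j") (auto simp: mult.commute)
  ultimately show ?thesis using False by simp
qed

lemma ent_witness_schmidt_lower_bound:
  fixes a :: "nat \<Rightarrow> real"
  assumes W: "ent_witness m n W" and trW: "mtrace W = 1"
    and e: "orthonormal m k e" and f: "orthonormal n k f"
    and nonneg: "\<forall>i<k. 0 \<le> a i" and decr: "\<forall>i j. i \<le> j \<and> j < k \<longrightarrow> a j \<le> a i"
  defines "\<psi> \<equiv> vec (m * n) (\<lambda>p. \<Sum>i<k. complex_of_real (a i) * kron_vec (e i) (f i) $ p)"
  shows "- (a 0 * (if 2 \<le> k then a 1 else 0)) \<le> Re (mtrace (W * proj \<psi>))"
proof -
  define lb where "lb = a 0 * (if 2 \<le> k then a 1 else 0)"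
  define c where "c i = sqrt (a i)" for i
  define G where "G i j = Re (mtrace (W * proj (kron_vec (e i) (f j))))" for i j
  define u where "u r = vec m (\<lambda>s. \<Sum>i<k. c i * twirl_phase k r i * e i $ s)" for r
  define v where "v r = vec n (\<lambda>t. \<Sum>j<k. c j * cnj (twirl_phase k r j) * f j $ t)" for r
  have Wc: "W \<in> carrier_mat (m * n) (m * n)" using W by (rule ent_witness_carrier)
  have ek: "\<And>i. i < k \<Longrightarrow> e i \<in> carrier_vec m" and fk: "\<And>i. i < k \<Longrightarrow> f i \<in> carrier_vec n"
    using e f by (simp_all add: orthonormal_carrier)
  have G_nonneg: "0 \<le> G i j" if "i < k" "j < k" for i j
    using ent_witness_product_vec[OF W ek[OF that(1)] fk[OF that(2)]] ek[OF that(1)] fk[OF that(2)]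
    by (simp add: G_def mtrace_mult_proj[OF Wc])
  have c2: "(c i)\<^sup>2 = a i" "(complex_of_real (c i))\<^sup>2 = complex_of_real (a i)" if "i < k" for i
    using nonneg that by (simp_all add: c_def flip: of_real_power)
  have "0 \<le> (\<Sum>r<2 ^ (k + 2). Re (mtrace (W * proj (kron_vec (u r) (v r)))))"
    using ent_witness_product_vec[OF W] by (intro sum_nonneg) (simp add: mtrace_mult_proj[OF Wc] u_def v_def)
  also have "\<dots> = 2 ^ (k + 2) * (Re (mtrace (W * proj \<psi>))
      + (\<Sum>i<k. \<Sum>j<k. (if i = j then 0 else a i * a j) * G i j))"
    using arg_cong[OF sum_mtrace_twirl[where W = W and m = m and n = n and k = k and x = e and y = f and c = c,
        OF Wc ek fk], where f = Re]
    by (simp add: u_def v_def \<psi>_def c2 G_def cong: if_cong)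
  finally have twirled: "0 \<le> Re (mtrace (W * proj \<psi>))
      + (\<Sum>i<k. \<Sum>j<k. (if i = j then 0 else a i * a j) * G i j)"
    by (simp add: zero_le_mult_iff power_le_zero_eq)
  have "(\<Sum>i<k. \<Sum>j<k. (if i = j then 0 else a i * a j) * G i j) \<le> (\<Sum>i<k. \<Sum>j<k. lb * G i j)"
    using schmidt_coeff_product_le[OF nonneg decr] G_nonneg
    by (intro sum_mono mult_right_mono) (auto simp: lb_def)
  also have "\<dots> \<le> lb * Re (mtrace W)"
    using ent_witness_sum_product_le_mtrace[OF W e f] nonneg
    by (auto simp: lb_def G_def mtrace_mult_proj[OF Wc] sum_distrib_left[symmetric] ek fk intro!: mult_left_mono)
  finally show ?thesis using twirled trW by (simp add: lb_def)
qed

lemma cscalar_prod_kron_schmidt: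
  fixes a :: "nat \<Rightarrow> real"
  assumes e: "orthonormal m k e" and f: "orthonormal n k f" and ij: "i < k" "j < k"
  shows "kron_vec (e i) (f j) \<bullet>c vec (m * n) (\<lambda>p. \<Sum>l<k. complex_of_real (a l) * kron_vec (e l) (f l) $ p)
    = (if i = j then complex_of_real (a i) else 0)"
proof -
  have ek: "\<And>l. l < k \<Longrightarrow> e l \<in> carrier_vec m" and fk: "\<And>l. l < k \<Longrightarrow> f l \<in> carrier_vec n"
    using e f by (simp_all add: orthonormal_carrier)
  have "vec (m * n) (\<lambda>p. \<Sum>l<k. complex_of_real (a l) * kron_vec (e l) (f l) $ p) \<bullet>c kron_vec (e i) (f j)
      = (\<Sum>l<k. complex_of_real (a l) * (kron_vec (e l) (f l) \<bullet>c kron_vec (e i) (f j)))"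
    using ek fk ij by (intro cscalar_prod_lincomb) auto
  also have "\<dots> = (\<Sum>l<k. if l = i then (if i = j then complex_of_real (a i) else 0) else 0)"
    using e f ij ek fk by (intro sum.cong refl) (auto simp: cscalar_prod_kron_vec[of _ m _ _ n] orthonormal_def)
  finally show ?thesis
    using ek fk ij by (simp add: cscalar_prod_swap[of _ "m * n" "kron_vec (e i) (f j)"])
qed

lemma mtrace_singlet_witness_mult_schmidt:
  fixes a :: "nat \<Rightarrow> real"
  assumes e: "orthonormal m k e" and f: "orthonormal n k f" and k: "2 \<le> k"
  defines "\<psi> \<equiv> vec (m * n) (\<lambda>p. \<Sum>l<k. complex_of_real (a l) * kron_vec (e l) (f l) $ p)"
  shows "mtrace (singlet_witness (e 0) (e 1) (f 0) (f 1) * proj \<psi>) = - complex_of_real (a 0 * a 1)"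
proof -
  have ek: "e 0 \<in> carrier_vec m" "e 1 \<in> carrier_vec m" and fk: "f 0 \<in> carrier_vec n" "f 1 \<in> carrier_vec n"
    using e f k by (simp_all add: orthonormal_carrier)
  have \<psi>: "\<psi> \<in> carrier_vec (m * n)" by (simp add: \<psi>_def)
  have t: "(proj \<psi> *\<^sub>v kron_vec (e i) (f j)) \<bullet>c kron_vec (e i') (f j')
      = (if i = j then complex_of_real (a i) else 0) * cnj (if i' = j' then complex_of_real (a i') else 0)"
    if "i < k" "j < k" "i' < k" "j' < k" for i j i' j'
    using that e f \<psi> cscalar_prod_kron_schmidt[OF e f, where a = a]
    by (simp add: cscalar_prod_proj_mult[of _ "m * n"] orthonormal_carrier flip: \<psi>_def)
  show ?thesis
    using mtrace_singlet_witness_mult[OF ek fk proj_carrier[OF \<psi>]] k by (simp add: t)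
qed

lemma witnessed_ent_eqI:
  assumes opt: "normalized_EW m n W\<^sub>0" "Re (mtrace (W\<^sub>0 * \<rho>)) = - l" and "0 \<le> l"
    and lower: "\<And>W. normalized_EW m n W \<Longrightarrow> - l \<le> Re (mtrace (W * \<rho>))"
  shows "witnessed_ent m n \<rho> = l"
proof -
  have "(INF W\<in>{W. normalized_EW m n W}. Re (mtrace (W * \<rho>))) = - l"
  proof (rule antisym)
    show "(INF W\<in>{W. normalized_EW m n W}. Re (mtrace (W * \<rho>))) \<le> - l"
      using opt lower by (intro cINF_lower[THEN order.trans] bdd_belowI2[of _ "- l"]) auto
    show "- l \<le> (INF W\<in>{W. normalized_EW m n W}. Re (mtrace (W * \<rho>)))"
      using opt lower by (intro cINF_greatest) auto
  qed
  then show ?thesis using \<open>0 \<le> l\<close> by (simp add: witnessed_ent_def)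
qed

lemma witnessed_ent_eq_0I:
  assumes "normalized_EW m n W\<^sub>0" and "\<And>W. normalized_EW m n W \<Longrightarrow> 0 \<le> Re (mtrace (W * \<rho>))"
  shows "witnessed_ent m n \<rho> = 0"
proof -
  have "0 \<le> (INF W\<in>{W. normalized_EW m n W}. Re (mtrace (W * \<rho>)))"
    using assms by (intro cINF_greatest) auto
  then show ?thesis by (simp add: witnessed_ent_def)
qed

theorem proposition6:
  fixes m n k :: nat and \<psi> :: "complex vec" and a :: "nat \<Rightarrow> real"
    and e f :: "nat \<Rightarrow> complex vec"
  assumes psi_dim: "\<psi> \<in> carrier_vec (m * n)"
    and psi_unit: "\<psi> \<bullet>c \<psi> = 1"
    and e_dim: "\<forall>i<k. e i \<in> carrier_vec m"
    and f_dim: "\<forall>i<k. f i \<in> carrier_vec n"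
    and e_on: "\<forall>i<k. \<forall>j<k. e i \<bullet>c e j = (if i = j then 1 else 0)"
    and f_on: "\<forall>i<k. \<forall>j<k. f i \<bullet>c f j = (if i = j then 1 else 0)"
    and a_nonneg: "\<forall>i<k. 0 \<le> a i"
    and a_decr: "\<forall>i j. i \<le> j \<and> j < k \<longrightarrow> a j \<le> a i"
    and schmidt: "\<psi> = vec (m * n) (\<lambda>t. \<Sum>i<k. complex_of_real (a i) * kron_vec (e i) (f i) $ t)"
  shows "witnessed_ent m n (proj \<psi>) = a 0 * (if 2 \<le> k then a 1 else 0)"
proof -
  have e: "orthonormal m k e" and f: "orthonormal n k f"
    using e_dim e_on f_dim f_on by (simp_all add: orthonormal_def)
  have "k \<noteq> 0"
    using psi_unit schmidt by (intro notI) (simp add: scalar_prod_def)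
  have lower: "- (a 0 * (if 2 \<le> k then a 1 else 0)) \<le> Re (mtrace (W * proj \<psi>))"
    if "normalized_EW m n W" for W
    using ent_witness_schmidt_lower_bound[OF _ _ e f a_nonneg a_decr] that schmidt
    by (simp add: normalized_EW_def)
  show ?thesis
  proof (cases "2 \<le> k")
    case True
    have "Re (mtrace (singlet_witness (e 0) (e 1) (f 0) (f 1) * proj \<psi>)) = - (a 0 * a 1)"
      using mtrace_singlet_witness_mult_schmidt[OF e f True] schmidt by simp
    then show ?thesis
      using normalized_EW_singlet_witness[OF e f True] lower True a_nonneg by (intro witnessed_ent_eqI) auto
  next
    case False
    have "normalized_EW m n (proj (kron_vec (e 0) (f 0)))"
      using \<open>k \<noteq> 0\<close> e_dim f_dim e_on f_on
      by (simp add: normalized_EW_def ent_witness_proj_kron_vec mtrace_proj[of _ "m * n"]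
          cscalar_prod_kron_vec[of _ m _ _ n])
    then have "witnessed_ent m n (proj \<psi>) = 0"
      using lower False by (intro witnessed_ent_eq_0I) auto
    with False show ?thesis by simp
  qed
qed

end
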